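(* For every $\bm U\in\mathbb V_h$, $$\|\Delta_h\bm U\|_h\le|\bm U|_{2,h}\le\frac{\pi^2}{4}\|\Delta_h\bm U\|_h.$$
   Context: $\Omega=[x_L,x_R]\times[y_L,y_R]$, $l_1=x_R-x_L$, $l_2=y_R-y_L$, $N_1,N_2$ even, $h_r=l_r/N_r$, grid points $x_{j_1}=x_L+j_1h_1$, $y_{j_2}=y_L+j_2h_2$, $0\le j_r\le N_r-1$. $\mathbb V_h$: grid functions $U_{j_1,j_2}$ periodic ($U_{j_1+N_1,j_2}=U_{j_1,j_2}=U_{j_1,j_2+N_2}$), identified with vectors $\bm U=(U_{0,0},U_{1,0},\dots,U_{N_1-1,0},U_{0,1},\dots,U_{N_1-1,N_2-1})^T$. $\langle\bm U,\bm V\rangle_h=h_1h_2\sum_{j_1,j_2}U_{j_1,j_2}V_{j_1,j_2}$, $\|\bm U\|_h^2=\langle\bm U,\bm U\rangle_h$. $\Delta_hU_{j_1,j_2}=\frac{U_{j_1+1,j_2}-2U_{j_1,j_2}+U_{j_1-1,j_2}}{h_1^2}+\frac{U_{j_1,j_2+1}-2U_{j_1,j_2}+U_{j_1,j_2-1}}{h_2^2}$. With $\mu_r=2\pi/l_r$, $g^{(1)}_k(x)=\frac1{N_1}\sum_{l=-N_1/2}^{N_1/2}\frac1{a_l}e^{\mathrm il\mu_1(x-x_k)}$, $a_l=1$ for $|l|<N_1/2$, $a_{\pm N_1/2}=2$ (similarly $g^{(2)}_k(y)$), $\bm D_2^x=((g^{(1)}_k)''(x_j))_{j,k=0}^{N_1-1}$,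 $\bm D_2^y=((g^{(2)}_k)''(y_j))_{j,k=0}^{N_2-1}$, $\mathbb A=\bm I_{N_2}\otimes\bm D_2^x+\bm D_2^y\otimes\bm I_{N_1}$ ($\otimes$ Kronecker product), and $|\bm U|_{2,h}=\|\mathbb A\bm U\|_h$. *)

theory Defs
  imports "HOL-Analysis.Analysis"
begin

text \<open>Grid functions on the periodic N1 x N2 grid are represented as
  U :: nat => nat => real; only the values U j1 j2 with j1 < N1, j2 < N2
  are used, periodicity being implemented by taking indices mod N.\<close>

definition grid_ip :: "real \<Rightarrow> real \<Rightarrow> nat \<Rightarrow> nat \<Rightarrow> (nat \<Rightarrow> nat \<Rightarrow> real) \<Rightarrow> (nat \<Rightarrow> nat \<Rightarrow> real) \<Rightarrow> real" where
  "grid_ip h1 h2 N1 N2 U V = h1 * h2 * (\<Sum>j1<N1. \<Sum>j2<N2. U j1 j2 * V j1 j2)"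

definition grid_norm :: "real \<Rightarrow> real \<Rightarrow> nat \<Rightarrow> nat \<Rightarrow> (nat \<Rightarrow> nat \<Rightarrow> real) \<Rightarrow> real" where
  "grid_norm h1 h2 N1 N2 U = sqrt (grid_ip h1 h2 N1 N2 U U)"

definition disc_lap :: "real \<Rightarrow> real \<Rightarrow> nat \<Rightarrow> nat \<Rightarrow> (nat \<Rightarrow> nat \<Rightarrow> real) \<Rightarrow> nat \<Rightarrow> nat \<Rightarrow> real" where
  "disc_lap h1 h2 N1 N2 U j1 j2 =
     (U ((j1 + 1) mod N1) j2 - 2 * U j1 j2 + U ((j1 + N1 - 1) mod N1) j2) / h1\<^sup>2
   + (U j1 ((j2 + 1) mod N2) - 2 * U j1 j2 + U j1 ((j2 + N2 - 1) mod N2)) / h2\<^sup>2"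

definition a_w :: "nat \<Rightarrow> int \<Rightarrow> real" where
  "a_w N l = (if \<bar>l\<bar> < int N div 2 then 1 else 2)"

text \<open>Trigonometric cardinal function g_k on an interval of length len starting at x0
  with N points (real-valued; the defining complex sum is real by symmetry).\<close>
definition card_fun :: "real \<Rightarrow> real \<Rightarrow> nat \<Rightarrow> nat \<Rightarrow> real \<Rightarrow> real" where
  "card_fun len x0 N k x =
     Re ((1 / of_nat N) * (\<Sum>l \<in> {-(int N div 2) .. int N div 2}.
        complex_of_real (1 / a_w N l) *
        exp (\<i> * complex_of_real (of_int l * (2 * pi / len) * (x - (x0 + real k * (len / real N)))))))"

definition D2 :: "real \<Rightarrow> real \<Rightarrow> nat \<Rightarrow> nat \<Rightarrow> nat \<Rightarrow> real" where
  "D2 len x0 N j k = deriv (deriv (card_fun len x0 N k)) (x0 + real j * (len / real N))"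

text \<open>The action of the matrix A = I_{N2} (x) D2x + D2y (x) I_{N1} on the vector of
  a grid function (ordering j1 fastest), written out componentwise.\<close>
definition spec_lap :: "real \<Rightarrow> real \<Rightarrow> real \<Rightarrow> real \<Rightarrow> nat \<Rightarrow> nat \<Rightarrow> (nat \<Rightarrow> nat \<Rightarrow> real) \<Rightarrow> nat \<Rightarrow> nat \<Rightarrow> real" where
  "spec_lap xL xR yL yR N1 N2 U j1 j2 =
     (\<Sum>k<N1. D2 (xR - xL) xL N1 j1 k * U k j2) + (\<Sum>k<N2. D2 (yR - yL) yL N2 j2 k * U j1 k)"

end

theory Submission
  imports Defs "HOL-Library.Real_Mod"
begin

text \<open>Both operators are diagonalised by the two-dimensional discrete Fourier transform: the
  character of frequency (l1, l2) is an eigenvector with eigenvalue -(\<lambda>1 + \<lambda>2), where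
  \<lambda> = (2 sin(\<pi> l / N) / h)^2 for the five-point Laplacian and \<lambda> = (2 \<pi> m / L)^2,
  m = min l (N - l), for the spectral one (the eigenvalue of the spectral matrix is a sum over
  the aliases of -l, which is where the weights a_l enter). With \<theta> = \<pi> m / N \<in> [0, \<pi>/2] and
  h = L / N the two symbols are (2 sin \<theta> / h)^2 and (2 \<theta> / h)^2, so
  sin \<theta> \<le> \<theta> \<le> \<pi>/2 sin \<theta> (Jordan's inequality) compares them frequency by frequency, and
  Parseval's identity turns this into the comparison of the grid norms.\<close>

definition unity_root :: "nat \<Rightarrow> int \<Rightarrow> complex" where
  "unity_root N n = cis (2 * pi * of_int n / of_nat N)"

lemma unity_root_add: "unity_root N (a + b) = unity_root N a * unity_root N b"
  unfolding unity_root_def by (simp add: cis_mult add_divide_distrib distrib_left)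

lemma unity_root_eq_1_iff:
  assumes "N > 0"
  shows "unity_root N n = 1 \<longleftrightarrow> int N dvd n"
proof -
  have "2 * pi * of_int n / of_nat N = of_int m * (2 * pi) \<longleftrightarrow> n = m * int N" for m
  proof -
    have "2 * pi * of_int n / of_nat N = of_int m * (2 * pi) \<longleftrightarrow> real_of_int n = of_int m * of_nat N"
      using assms by (auto simp: field_simps)
    also have "\<dots> \<longleftrightarrow> n = m * int N"
      by (metis of_int_eq_iff of_int_mult of_int_of_nat_eq)
    finally show ?thesis .
  qed
  then show ?thesis
    unfolding unity_root_def cis_eq_1_iff by (auto simp: dvd_def mult.commute)
qed

lemma unity_root_cong:
  assumes "N > 0" "int N dvd a - b"
  shows "unity_root N a = unity_root N b"
proof -
  have "unity_root N a = unity_root N b * unity_root N (a - b)"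
    by (metis unity_root_add add_diff_cancel_left' add.commute diff_add_cancel)
  with assms show ?thesis by (simp add: unity_root_eq_1_iff)
qed

lemma unity_root_mult_mod:
  assumes "N > 0"
  shows "unity_root N (n * int (m mod N)) = unity_root N (n * int m)"
proof (rule unity_root_cong[OF assms])
  have "int m = int N * int (m div N) + int (m mod N)"
    by (metis div_mult_mod_eq mult.commute of_nat_add of_nat_mult)
  then have "n * int (m mod N) - n * int m = int N * (- n * int (m div N))"
    by (simp add: algebra_simps)
  then show "int N dvd n * int (m mod N) - n * int m"
    by simp
qed

lemma unity_root_power: "unity_root N (n * int j) = unity_root N n ^ j"
proof -
  have "unity_root N n ^ j = cis (real j * (2 * pi * of_int n / of_nat N))"
    unfolding unity_root_def by (rule Complex.DeMoivre)
  then show ?thesis unfolding unity_root_def by (simp add: algebra_simps)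
qed

lemma unity_root_uminus: "unity_root N (- n) = cnj (unity_root N n)"
  unfolding unity_root_def by (simp add: cis_cnj)

lemma unity_root_add_uminus:
  "unity_root N n + unity_root N (- n) = of_real (2 * cos (2 * pi * of_int n / of_nat N))"
  unfolding unity_root_def by (simp add: cis_cnj complex_eq_iff cos_minus)

lemma sum_unity_root:
  assumes "N > 0"
  shows "(\<Sum>j<N. unity_root N (n * int j)) = (if int N dvd n then of_nat N else 0)"
proof (cases "int N dvd n")
  case True
  then have "unity_root N (n * int j) = 1" for j
    using assms by (simp add: unity_root_eq_1_iff)
  then show ?thesis using True by simp
next
  case False
  then have "unity_root N n \<noteq> 1" using assms by (simp add: unity_root_eq_1_iff)
  moreover have "unity_root N n ^ N = 1"
    using assms by (simp add: unity_root_power[symmetric] unity_root_eq_1_iff)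
  ultimately show ?thesis using False by (simp add: unity_root_power geometric_sum)
qed

definition dft :: "nat \<Rightarrow> (nat \<Rightarrow> complex) \<Rightarrow> nat \<Rightarrow> complex" where
  "dft N f l = (\<Sum>j<N. f j * unity_root N (int l * int j))"

lemma dft_add: "dft N (\<lambda>j. f j + g j) l = dft N f l + dft N g l"
  unfolding dft_def by (simp add: distrib_right sum.distrib)

lemma dft_diff: "dft N (\<lambda>j. f j - g j) l = dft N f l - dft N g l"
  unfolding dft_def by (simp add: left_diff_distrib sum_subtractf)

lemma dft_cmult: "dft N (\<lambda>j. c * f j) l = c * dft N f l"
  unfolding dft_def by (simp add: sum_distrib_left mult.assoc)

lemma dft_divide: "dft N (\<lambda>j. f j / c) l = dft N f l / c"
  unfolding dft_def by (simp add: sum_divide_distrib)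

lemma dft_sum: "dft N (\<lambda>j. \<Sum>k\<in>K. g k j) l = (\<Sum>k\<in>K. dft N (g k) l)"
  unfolding dft_def by (simp add: sum_distrib_right sum.swap[of _ K])

lemma dft_parseval:
  assumes "N > 0"
  shows "(\<Sum>l<N. (cmod (dft N f l))\<^sup>2) = real N * (\<Sum>j<N. (cmod (f j))\<^sup>2)"
proof -
  have orth: "(\<Sum>l<N. unity_root N ((int j - int j') * int l)) = (if j = j' then of_nat N else 0)"
    if "j < N" "j' < N" for j j'
  proof -
    have "int N dvd int j - int j' \<longleftrightarrow> j = j'"
      using that by (simp add: mod_eq_dvd_iff[symmetric])
    then show ?thesis by (simp add: sum_unity_root[OF assms])
  qed
  have "complex_of_real (\<Sum>l<N. (cmod (dft N f l))\<^sup>2)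
      = (\<Sum>l<N. \<Sum>j'<N. \<Sum>j<N. f j * cnj (f j') * unity_root N ((int j - int j') * int l))"
    unfolding dft_def of_real_sum complex_norm_square
    by (simp add: sum_distrib_left sum_distrib_right cnj_sum unity_root_uminus[symmetric]
        unity_root_add[symmetric] algebra_simps)
  also have "\<dots> = (\<Sum>j'<N. \<Sum>j<N. f j * cnj (f j') * (\<Sum>l<N. unity_root N ((int j - int j') * int l)))"
  proof -
    have "(\<Sum>l<N. \<Sum>j'<N. \<Sum>j<N. g l j' j) = (\<Sum>j'<N. \<Sum>j<N. \<Sum>l<N. g l j' j)"
      for g :: "nat \<Rightarrow> nat \<Rightarrow> nat \<Rightarrow> complex"
      by (subst sum.swap) (rule sum.cong[OF refl], rule sum.swap)
    then show ?thesis by (simp add: sum_distrib_left)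
  qed
  also have "\<dots> = (\<Sum>j'<N. \<Sum>j<N. if j = j' then f j * cnj (f j') * of_nat N else 0)"
    by (intro sum.cong refl) (simp add: orth)
  also have "\<dots> = (\<Sum>j<N. f j * cnj (f j) * of_nat N)"
    by (simp add: sum.delta)
  also have "\<dots> = complex_of_real (real N * (\<Sum>j<N. (cmod (f j))\<^sup>2))"
    by (simp add: sum_distrib_left mult.commute complex_norm_square[symmetric])
  finally show ?thesis by (simp only: of_real_eq_iff)
qed

lemma sum_rotate_mod:
  fixes N s :: nat
  shows "(\<Sum>j<N. g ((j + s) mod N)) = (\<Sum>j<N. g j)"
proof (cases "N = 0")
  case False
  have "inj_on (\<lambda>j. (j + s) mod N) {..<N}"
  proof (rule inj_onI)
    fix i j assume "i \<in> {..<N}" "j \<in> {..<N}" "(i + s) mod N = (j + s) mod N"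
    then have "int N dvd (int i + int s) - (int j + int s)"
      by (metis mod_eq_dvd_iff of_nat_add of_nat_mod)
    then have "int i mod int N = int j mod int N"
      by (simp add: mod_eq_dvd_iff)
    with \<open>i \<in> {..<N}\<close> \<open>j \<in> {..<N}\<close> show "i = j" by simp
  qed
  moreover have "(\<lambda>j. (j + s) mod N) ` {..<N} = {..<N}"
    using calculation False by (intro endo_inj_surj) auto
  ultimately show ?thesis
    using sum.reindex[of "\<lambda>j. (j + s) mod N" "{..<N}" g] by simp
qed simp

lemma dft_rotate:
  assumes "N > 0"
  shows "dft N (\<lambda>j. f ((j + s) mod N)) l = unity_root N (- (int l * int s)) * dft N f l"
proof -
  have shift: "unity_root N (int l * int j)
      = unity_root N (- (int l * int s)) * unity_root N (int l * int ((j + s) mod N))" for j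
    unfolding unity_root_mult_mod[OF assms] unity_root_add[symmetric] by (simp add: algebra_simps)
  have "dft N (\<lambda>j. f ((j + s) mod N)) l
      = unity_root N (- (int l * int s))
        * (\<Sum>j<N. f ((j + s) mod N) * unity_root N (int l * int ((j + s) mod N)))"
    unfolding dft_def sum_distrib_left
  proof (intro sum.cong refl)
    fix j
    show "f ((j + s) mod N) * unity_root N (int l * int j) = unity_root N (- (int l * int s))
        * (f ((j + s) mod N) * unity_root N (int l * int ((j + s) mod N)))"
      using shift[of j] by (simp add: mult_ac)
  qed
  then show ?thesis
    using sum_rotate_mod[where g = "\<lambda>i. f i * unity_root N (int l * int i)" and N = N and s = s]
    unfolding dft_def by simp
qed

definition fd_symbol :: "real \<Rightarrow> nat \<Rightarrow> nat \<Rightarrow> real" where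
  "fd_symbol h N l = (2 * sin (pi * real l / real N) / h)\<^sup>2"

lemma dft_second_difference:
  assumes "N > 0"
  shows "dft N (\<lambda>j. (f ((j + 1) mod N) - 2 * f j + f ((j + N - 1) mod N)) / of_real (h\<^sup>2)) l
    = - of_real (fd_symbol h N l) * dft N f l"
proof -
  have "j + N - 1 = j + (N - 1)" for j using assms by simp
  then have "dft N (\<lambda>j. (f ((j + 1) mod N) - 2 * f j + f ((j + N - 1) mod N)) / of_real (h\<^sup>2)) l
      = (unity_root N (- int l) - 2 + unity_root N (- (int l * int (N - 1)))) * dft N f l
        / of_real (h\<^sup>2)"
    unfolding dft_divide dft_add dft_diff dft_cmult
    using dft_rotate[OF assms, of f 1 l] dft_rotate[OF assms, of f "N - 1" l]
    by (simp add: algebra_simps)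
  also have "unity_root N (- (int l * int (N - 1))) = unity_root N (int l)"
    using assms by (intro unity_root_cong) (simp_all add: of_nat_diff algebra_simps)
  also have "unity_root N (- int l) - 2 + unity_root N (int l)
      = of_real (2 * cos (2 * (pi * real l / real N)) - 2)"
    using unity_root_add_uminus[of N "int l"] by (simp add: algebra_simps)
  also have "\<dots> = - of_real (4 * (sin (pi * real l / real N))\<^sup>2)"
    unfolding cos_double_sin by (simp add: algebra_simps)
  finally show ?thesis
    unfolding fd_symbol_def by (simp add: power_divide power_mult_distrib)
qed

lemma dft_matrix_mult:
  assumes "\<And>k. k < N \<Longrightarrow> dft N (\<lambda>j. T j k) l = s * unity_root N (int l * int k)"
  shows "dft N (\<lambda>j. \<Sum>k<N. T j k * f k) l = s * dft N f l"
proof -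
  have "dft N (\<lambda>j. \<Sum>k<N. T j k * f k) l = (\<Sum>k<N. dft N (\<lambda>j. f k * T j k) l)"
    unfolding dft_sum[symmetric] by (simp only: mult.commute)
  also have "\<dots> = (\<Sum>k<N. f k * dft N (\<lambda>j. T j k) l)"
    by (simp only: dft_cmult)
  also have "\<dots> = (\<Sum>k<N. f k * (s * unity_root N (int l * int k)))"
    by (simp add: assms)
  finally show ?thesis
    unfolding dft_def by (simp add: sum_distrib_left mult_ac)
qed

definition dft2 :: "nat \<Rightarrow> nat \<Rightarrow> (nat \<Rightarrow> nat \<Rightarrow> real) \<Rightarrow> nat \<Rightarrow> nat \<Rightarrow> complex" where
  "dft2 N1 N2 U l1 l2 = dft N1 (\<lambda>j1. dft N2 (\<lambda>j2. of_real (U j1 j2)) l2) l1"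

lemma dft2_parseval:
  assumes "N1 > 0" "N2 > 0"
  shows "(\<Sum>l1<N1. \<Sum>l2<N2. (cmod (dft2 N1 N2 U l1 l2))\<^sup>2)
    = real N1 * real N2 * (\<Sum>j1<N1. \<Sum>j2<N2. (U j1 j2)\<^sup>2)"
proof -
  have "(\<Sum>l1<N1. \<Sum>l2<N2. (cmod (dft2 N1 N2 U l1 l2))\<^sup>2)
      = (\<Sum>l2<N2. \<Sum>l1<N1. (cmod (dft N1 (\<lambda>j1. dft N2 (\<lambda>j2. of_real (U j1 j2)) l2) l1))\<^sup>2)"
    unfolding dft2_def by (rule sum.swap)
  also have "\<dots> = real N1 * (\<Sum>j1<N1. \<Sum>l2<N2. (cmod (dft N2 (\<lambda>j2. of_real (U j1 j2)) l2))\<^sup>2)"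
    by (simp add: dft_parseval[OF assms(1)] sum_distrib_left sum.swap[of _ "{..<N2}" "{..<N1}"])
  also have "\<dots> = real N1 * real N2 * (\<Sum>j1<N1. \<Sum>j2<N2. (U j1 j2)\<^sup>2)"
    by (simp add: dft_parseval[OF assms(2)] sum_distrib_left mult.assoc)
  finally show ?thesis .
qed

lemma grid_norm_le_if_dft2_le:
  assumes "N1 > 0" "N2 > 0" "0 \<le> h1 * h2" "0 \<le> c"
    and "\<And>l1 l2. l1 < N1 \<Longrightarrow> l2 < N2 \<Longrightarrow>
      cmod (dft2 N1 N2 F l1 l2) \<le> c * cmod (dft2 N1 N2 G l1 l2)"
  shows "grid_norm h1 h2 N1 N2 F \<le> c * grid_norm h1 h2 N1 N2 G"
proof -
  have energy: "h1 * h2 * (\<Sum>j1<N1. \<Sum>j2<N2. (U j1 j2)\<^sup>2)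
      = h1 * h2 / (real N1 * real N2) * (\<Sum>l1<N1. \<Sum>l2<N2. (cmod (dft2 N1 N2 U l1 l2))\<^sup>2)" for U
    using assms(1,2) by (simp add: dft2_parseval)
  have "(\<Sum>l1<N1. \<Sum>l2<N2. (cmod (dft2 N1 N2 F l1 l2))\<^sup>2)
      \<le> (\<Sum>l1<N1. \<Sum>l2<N2. c\<^sup>2 * (cmod (dft2 N1 N2 G l1 l2))\<^sup>2)"
    using assms(5) by (intro sum_mono) (simp add: power_mono flip: power_mult_distrib)
  also have "\<dots> = c\<^sup>2 * (\<Sum>l1<N1. \<Sum>l2<N2. (cmod (dft2 N1 N2 G l1 l2))\<^sup>2)"
    by (simp add: sum_distrib_left)
  finally have "h1 * h2 / (real N1 * real N2) * (\<Sum>l1<N1. \<Sum>l2<N2. (cmod (dft2 N1 N2 F l1 l2))\<^sup>2)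
      \<le> h1 * h2 / (real N1 * real N2) * (c\<^sup>2 * (\<Sum>l1<N1. \<Sum>l2<N2. (cmod (dft2 N1 N2 G l1 l2))\<^sup>2))"
    using assms(3) by (intro mult_left_mono) simp_all
  then have "h1 * h2 * (\<Sum>j1<N1. \<Sum>j2<N2. (F j1 j2)\<^sup>2)
      \<le> c\<^sup>2 * (h1 * h2 * (\<Sum>j1<N1. \<Sum>j2<N2. (G j1 j2)\<^sup>2))"
    unfolding energy by (simp only: mult.left_commute[of "c\<^sup>2"])
  then have "sqrt (h1 * h2 * (\<Sum>j1<N1. \<Sum>j2<N2. (F j1 j2)\<^sup>2))
      \<le> sqrt (c\<^sup>2 * (h1 * h2 * (\<Sum>j1<N1. \<Sum>j2<N2. (G j1 j2)\<^sup>2)))"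
    by (rule real_sqrt_le_mono)
  also have "\<dots> = c * sqrt (h1 * h2 * (\<Sum>j1<N1. \<Sum>j2<N2. (G j1 j2)\<^sup>2))"
    using assms(4) by (simp add: real_sqrt_mult)
  finally show ?thesis
    unfolding grid_norm_def grid_ip_def by (simp only: power2_eq_square)
qed

lemma grid_norm_le_if_multiplier_le:
  assumes "N1 > 0" "N2 > 0" "0 \<le> h1 * h2" "0 \<le> c"
    and "\<And>l1 l2. l1 < N1 \<Longrightarrow> l2 < N2 \<Longrightarrow>
      dft2 N1 N2 F l1 l2 = of_real (a l1 l2) * dft2 N1 N2 U l1 l2"
    and "\<And>l1 l2. l1 < N1 \<Longrightarrow> l2 < N2 \<Longrightarrow>
      dft2 N1 N2 G l1 l2 = of_real (b l1 l2) * dft2 N1 N2 U l1 l2"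
    and "\<And>l1 l2. l1 < N1 \<Longrightarrow> l2 < N2 \<Longrightarrow> \<bar>a l1 l2\<bar> \<le> c * \<bar>b l1 l2\<bar>"
  shows "grid_norm h1 h2 N1 N2 F \<le> c * grid_norm h1 h2 N1 N2 G"
proof (rule grid_norm_le_if_dft2_le[OF assms(1-4)])
  fix l1 l2 assume l: "l1 < N1" "l2 < N2"
  have "\<bar>a l1 l2\<bar> * cmod (dft2 N1 N2 U l1 l2) \<le> c * \<bar>b l1 l2\<bar> * cmod (dft2 N1 N2 U l1 l2)"
    using assms(7)[OF l] by (rule mult_right_mono) simp
  then show "cmod (dft2 N1 N2 F l1 l2) \<le> c * cmod (dft2 N1 N2 G l1 l2)"
    unfolding assms(5,6)[OF l] norm_mult norm_of_real by (simp add: mult.assoc)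
qed

lemma dft2_kronecker_sum:
  assumes "\<And>k. k < N1 \<Longrightarrow>
      dft N1 (\<lambda>j. of_real (T1 j k)) l1 = of_real \<sigma> * unity_root N1 (int l1 * int k)"
    and "\<And>k. k < N2 \<Longrightarrow>
      dft N2 (\<lambda>j. of_real (T2 j k)) l2 = of_real \<tau> * unity_root N2 (int l2 * int k)"
  shows "dft2 N1 N2 (\<lambda>j1 j2. (\<Sum>k<N1. T1 j1 k * U k j2) + (\<Sum>k<N2. T2 j2 k * U j1 k)) l1 l2
    = of_real (\<sigma> + \<tau>) * dft2 N1 N2 U l1 l2"
proof -
  define V where "V j1 = dft N2 (\<lambda>j2. complex_of_real (U j1 j2)) l2" for j1
  have "dft N2 (\<lambda>j2. of_real (\<Sum>k<N1. T1 j1 k * U k j2)) l2 = (\<Sum>k<N1. of_real (T1 j1 k) * V k)"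
    for j1 unfolding V_def by (simp add: dft_sum dft_cmult)
  moreover have "dft N2 (\<lambda>j2. of_real (\<Sum>k<N2. T2 j2 k * U j1 k)) l2 = of_real \<tau> * V j1" for j1
    unfolding V_def of_real_sum of_real_mult by (rule dft_matrix_mult[OF assms(2)])
  ultimately have "dft N2 (\<lambda>j2. of_real ((\<Sum>k<N1. T1 j1 k * U k j2) + (\<Sum>k<N2. T2 j2 k * U j1 k))) l2
      = (\<Sum>k<N1. of_real (T1 j1 k) * V k) + of_real \<tau> * V j1" for j1
    unfolding of_real_add dft_add by simp
  then have "dft2 N1 N2 (\<lambda>j1 j2. (\<Sum>k<N1. T1 j1 k * U k j2) + (\<Sum>k<N2. T2 j2 k * U j1 k)) l1 l2
      = dft N1 (\<lambda>j1. (\<Sum>k<N1. of_real (T1 j1 k) * V k) + of_real \<tau> * V j1) l1"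
    unfolding dft2_def by simp
  also have "\<dots> = of_real (\<sigma> + \<tau>) * dft N1 V l1"
    by (simp add: dft_add dft_cmult dft_matrix_mult[OF assms(1)] distrib_right)
  finally show ?thesis unfolding dft2_def V_def .
qed

lemma dft2_disc_lap:
  assumes "N1 > 0" "N2 > 0"
  shows "dft2 N1 N2 (disc_lap h1 h2 N1 N2 U) l1 l2
    = - of_real (fd_symbol h1 N1 l1 + fd_symbol h2 N2 l2) * dft2 N1 N2 U l1 l2"
proof -
  define V where "V j1 = dft N2 (\<lambda>j2. complex_of_real (U j1 j2)) l2" for j1
  have "dft N2 (\<lambda>j2. of_real (disc_lap h1 h2 N1 N2 U j1 j2)) l2
      = (V ((j1 + 1) mod N1) - 2 * V j1 + V ((j1 + N1 - 1) mod N1)) / of_real (h1\<^sup>2)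
        - of_real (fd_symbol h2 N2 l2) * V j1" for j1
  proof -
    have "dft N2 (\<lambda>j2. (of_real (U ((j1 + 1) mod N1) j2) - 2 * of_real (U j1 j2)
        + of_real (U ((j1 + N1 - 1) mod N1) j2)) / of_real (h1\<^sup>2)) l2
        = (V ((j1 + 1) mod N1) - 2 * V j1 + V ((j1 + N1 - 1) mod N1)) / of_real (h1\<^sup>2)"
      unfolding V_def dft_divide dft_add dft_diff dft_cmult ..
    moreover have "dft N2 (\<lambda>j2. (of_real (U j1 ((j2 + 1) mod N2)) - 2 * of_real (U j1 j2)
        + of_real (U j1 ((j2 + N2 - 1) mod N2))) / of_real (h2\<^sup>2)) l2
        = - of_real (fd_symbol h2 N2 l2) * V j1"
      unfolding V_def by (rule dft_second_difference[OF assms(2)])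
    ultimately show ?thesis
      unfolding disc_lap_def of_real_add of_real_diff of_real_divide of_real_mult of_real_numeral
        dft_add by simp
  qed
  then have "dft2 N1 N2 (disc_lap h1 h2 N1 N2 U) l1 l2
      = dft N1 (\<lambda>j1. (V ((j1 + 1) mod N1) - 2 * V j1 + V ((j1 + N1 - 1) mod N1))
          / of_real (h1\<^sup>2)) l1 - of_real (fd_symbol h2 N2 l2) * dft N1 V l1"
    unfolding dft2_def by (simp add: dft_diff dft_cmult)
  also have "dft N1 (\<lambda>j1. (V ((j1 + 1) mod N1) - 2 * V j1 + V ((j1 + N1 - 1) mod N1))
        / of_real (h1\<^sup>2)) l1 = - of_real (fd_symbol h1 N1 l1) * dft N1 V l1"
    by (rule dft_second_difference[OF assms(1)])
  finally show ?thesis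
    unfolding dft2_def V_def by (simp add: algebra_simps)
qed

lemma card_fun_cos:
  "card_fun len x0 N k = (\<lambda>x. (1 / real N) * (\<Sum>l\<in>{-(int N div 2)..int N div 2}.
      (1 / a_w N l) * cos (of_int l * (2 * pi / len) * (x - (x0 + real k * (len / real N))))))"
  unfolding card_fun_def cis_conv_exp[symmetric] by (simp add: Re_sum)

lemma deriv2_card_fun:
  "deriv (deriv (card_fun len x0 N k)) = (\<lambda>x. (1 / real N) * (\<Sum>l\<in>{-(int N div 2)..int N div 2}.
      (1 / a_w N l) * (- cos (of_int l * (2 * pi / len) * (x - (x0 + real k * (len / real N))))
        * (of_int l * (2 * pi / len)) * (of_int l * (2 * pi / len)))))"
proof -
  have cos': "((\<lambda>x. cos (a * (x - b))) has_real_derivative (- sin (a * (x - b)) * a)) (at x)"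
    and sin': "((\<lambda>x. - sin (a * (x - b)) * a)
      has_real_derivative (- cos (a * (x - b)) * a * a)) (at x)"
    for a b x :: real
    by (rule derivative_eq_intros refl | simp)+
  have first: "deriv (card_fun len x0 N k) = (\<lambda>x. (1 / real N) * (\<Sum>l\<in>{-(int N div 2)..int N div 2}.
      (1 / a_w N l) * (- sin (of_int l * (2 * pi / len) * (x - (x0 + real k * (len / real N))))
        * (of_int l * (2 * pi / len)))))"
    unfolding card_fun_cos by (intro ext DERIV_imp_deriv DERIV_cmult DERIV_sum cos')
  show ?thesis
    unfolding first by (intro ext DERIV_imp_deriv DERIV_cmult DERIV_sum sin')
qed

definition spec_weight :: "real \<Rightarrow> nat \<Rightarrow> int \<Rightarrow> real" where
  "spec_weight len N l = (1 / a_w N l) * (of_int l * (2 * pi / len))\<^sup>2"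

lemma D2_cos:
  assumes "len \<noteq> 0" "N > 0"
  shows "D2 len x0 N j k = - (1 / real N) * (\<Sum>l\<in>{-(int N div 2)..int N div 2}.
      spec_weight len N l * cos (2 * pi * of_int (l * (int j - int k)) / of_nat N))"
proof -
  have "of_int l * (2 * pi / len) * (x0 + real j * (len / real N) - (x0 + real k * (len / real N)))
      = 2 * pi * of_int (l * (int j - int k)) / of_nat N" for l
    using assms by (simp add: field_simps)
  then show ?thesis
    unfolding D2_def deriv2_card_fun spec_weight_def
    by (simp add: sum_negf power2_eq_square algebra_simps)
qed

lemma D2_unity_root:
  assumes "len \<noteq> 0" "N > 0"
  shows "complex_of_real (D2 len x0 N j k) = - (1 / of_nat N) * (\<Sum>l\<in>{-(int N div 2)..int N div 2}.
      of_real (spec_weight len N l) * unity_root N (l * (int j - int k)))"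
proof -
  let ?I = "{-(int N div 2)..int N div 2}" and ?n = "int j - int k"
  have "(\<Sum>l\<in>?I. of_real (spec_weight len N l) * unity_root N (- l * ?n))
      = (\<Sum>l\<in>?I. of_real (spec_weight len N (- l)) * unity_root N (- l * ?n))"
    by (simp add: spec_weight_def a_w_def)
  also have "\<dots> = (\<Sum>l\<in>?I. of_real (spec_weight len N l) * unity_root N (l * ?n))"
    by (rule sum.reindex_bij_witness[of _ uminus uminus]) auto
  finally have reflect: "(\<Sum>l\<in>?I. of_real (spec_weight len N l) * unity_root N (- l * ?n))
      = (\<Sum>l\<in>?I. of_real (spec_weight len N l) * unity_root N (l * ?n))" .
  have cos_unity_root: "complex_of_real (cos (2 * pi * of_int (l * ?n) / of_nat N))
      = (unity_root N (l * ?n) + unity_root N (- l * ?n)) / 2" for l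
    using unity_root_add_uminus[of N "l * ?n"] by simp
  have "complex_of_real (D2 len x0 N j k) = - (1 / of_nat N) * (\<Sum>l\<in>?I.
      of_real (spec_weight len N l) * of_real (cos (2 * pi * of_int (l * ?n) / of_nat N)))"
    unfolding D2_cos[OF assms] by simp
  also have "\<dots> = - (1 / of_nat N) * (((\<Sum>l\<in>?I. of_real (spec_weight len N l) * unity_root N (l * ?n))
      + (\<Sum>l\<in>?I. of_real (spec_weight len N l) * unity_root N (- l * ?n))) / 2)"
    unfolding cos_unity_root by (simp add: sum.distrib[symmetric] sum_divide_distrib algebra_simps)
  finally show ?thesis unfolding reflect by simp
qed

lemma dft_D2_column_aliases:
  assumes "len \<noteq> 0" "N > 0"
  shows "dft N (\<lambda>j. of_real (D2 len x0 N j k)) l0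
    = - of_real (\<Sum>l\<in>{-(int N div 2)..int N div 2}.
          if int N dvd l + int l0 then spec_weight len N l else 0)
      * unity_root N (int l0 * int k)"
proof -
  let ?I = "{-(int N div 2)..int N div 2}"
  have aliasing: "of_real (spec_weight len N l) * unity_root N (- l * int k)
        * (\<Sum>j<N. unity_root N ((l + int l0) * int j))
      = of_nat N * (if int N dvd l + int l0
          then of_real (spec_weight len N l) * unity_root N (int l0 * int k) else 0)" for l
  proof (cases "int N dvd l + int l0")
    case True
    moreover have "- l * int k - int l0 * int k = - ((l + int l0) * int k)"
      by (simp add: algebra_simps)
    ultimately have "int N dvd - l * int k - int l0 * int k"
      by simp
    then have "unity_root N (- l * int k) = unity_root N (int l0 * int k)"
      by (rule unity_root_cong[OF assms(2)])
    then show ?thesis using True by (simp add: sum_unity_root[OF assms(2)])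
  qed (simp add: sum_unity_root[OF assms(2)])
  have "dft N (\<lambda>j. of_real (D2 len x0 N j k)) l0
      = - (1 / of_nat N) * (\<Sum>l\<in>?I. of_real (spec_weight len N l) * unity_root N (- l * int k)
          * (\<Sum>j<N. unity_root N ((l + int l0) * int j)))"
  proof -
    have "dft N (\<lambda>j. of_real (D2 len x0 N j k)) l0
        = (\<Sum>j<N. - (1 / of_nat N) * (\<Sum>l\<in>?I. of_real (spec_weight len N l)
            * unity_root N (- l * int k) * unity_root N ((l + int l0) * int j)))"
      unfolding dft_def D2_unity_root[OF assms]
      by (intro sum.cong refl) (simp add: sum_distrib_left sum_distrib_right mult.assoc
          unity_root_add[symmetric] algebra_simps)
    then show ?thesis
      by (simp add: sum_distrib_left sum.swap[of _ "{..<N}"])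
  qed
  also have "\<dots> = - (\<Sum>l\<in>?I. if int N dvd l + int l0 then of_real (spec_weight len N l)
      * unity_root N (int l0 * int k) else 0)"
    unfolding aliasing using assms(2) by (simp add: sum_distrib_left[symmetric])
  also have "\<dots> = - of_real (\<Sum>l\<in>?I. if int N dvd l + int l0 then spec_weight len N l else 0)
      * unity_root N (int l0 * int k)"
    by (simp add: sum_distrib_right if_distrib[of complex_of_real] cong: if_cong)
       (intro sum.cong refl, simp)
  finally show ?thesis .
qed

definition spectral_symbol :: "real \<Rightarrow> nat \<Rightarrow> nat \<Rightarrow> real" where
  "spectral_symbol len N l = (2 * pi * real (min l (N - l)) / len)\<^sup>2"

text \<open>Of the aliases of -l0 only -l0 and N - l0 can lie in [-N/2, N/2]; both do exactly at
  the Nyquist frequency l0 = N/2, where the two halved weights 1/a_(\<plusminus>N/2) add up to one.\<close>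

lemma sum_spec_weight_aliases:
  assumes "even N" "N > 0" "l0 < N"
  shows "(\<Sum>l\<in>{-(int N div 2)..int N div 2}.
      if int N dvd l + int l0 then spec_weight len N l else 0) = spectral_symbol len N l0"
proof -
  define M where "M = int N div 2"
  have NM: "int N = 2 * M" using assms(1) unfolding M_def by auto
  have "M > 0" using NM assms(2) by simp
  have aliases: "int N dvd l + int l0 \<longleftrightarrow> l = - int l0 \<or> l = int N - int l0" if "l \<in> {-M..M}" for l
  proof
    assume "int N dvd l + int l0"
    then obtain q where q: "l + int l0 = int N * q" by (auto elim: dvdE)
    have "int N * (- 1) < int N * q" "int N * q < int N * 2"
      using that NM assms(3) unfolding q[symmetric] by auto
    then have "- 1 < q" "q < 2"
      using assms(2) by (simp_all only: mult_less_cancel_left_pos of_nat_0_less_iff)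
    then have "q = 0 \<or> q = 1" by auto
    then show "l = - int l0 \<or> l = int N - int l0" using q by auto
  qed auto
  have weight: "spec_weight len N l = (1 / a_w N l) * (2 * pi * real_of_int \<bar>l\<bar> / len)\<^sup>2" for l
    unfolding spec_weight_def by (simp add: power_mult_distrib power_divide)
  consider "int l0 < M" | "int l0 = M" | "int l0 > M" by linarith
  then show ?thesis
  proof cases
    case 1
    then have "(\<Sum>l\<in>{-M..M}. if int N dvd l + int l0 then spec_weight len N l else 0)
        = (\<Sum>l\<in>{-M..M}. if l = - int l0 then spec_weight len N l else 0)"
      using aliases NM by (intro sum.cong refl) auto
    moreover have "a_w N (- int l0) = 1" "min l0 (N - l0) = l0"
      using 1 NM unfolding a_w_def M_def by auto
    ultimately show ?thesis
      using 1 unfolding M_def[symmetric] weight spectral_symbol_def by simp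
  next
    case 2
    then have "(\<Sum>l\<in>{-M..M}. if int N dvd l + int l0 then spec_weight len N l else 0)
        = (\<Sum>l\<in>{-M..M}. (if l = - M then spec_weight len N l else 0)
            + (if l = M then spec_weight len N l else 0))"
      using aliases NM \<open>M > 0\<close> by (intro sum.cong refl) auto
    moreover have "a_w N M = 2" "a_w N (- M) = 2" "min l0 (N - l0) = l0"
      using 2 NM unfolding a_w_def M_def by auto
    ultimately show ?thesis
      using \<open>M > 0\<close> unfolding M_def[symmetric] weight spectral_symbol_def
      by (simp add: sum.distrib flip: 2)
  next
    case 3
    then have "(\<Sum>l\<in>{-M..M}. if int N dvd l + int l0 then spec_weight len N l else 0)
        = (\<Sum>l\<in>{-M..M}. if l = int N - int l0 then spec_weight len N l else 0)"
      using aliases NM by (intro sum.cong refl) auto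
    moreover have "a_w N (int N - int l0) = 1" "min l0 (N - l0) = N - l0" "int N - int l0 \<in> {-M..M}"
      using 3 NM assms(3) unfolding a_w_def M_def by auto
    ultimately show ?thesis
      using assms(3) unfolding M_def[symmetric] weight spectral_symbol_def
      by (simp add: of_nat_diff)
  qed
qed

lemma dft_D2_column:
  assumes "len \<noteq> 0" "even N" "N > 0" "l < N"
  shows "dft N (\<lambda>j. of_real (D2 len x0 N j k)) l
    = of_real (- spectral_symbol len N l) * unity_root N (int l * int k)"
  using dft_D2_column_aliases[OF assms(1,3), of x0 k l, unfolded sum_spec_weight_aliases[OF assms(2-4)]]
  by simp

lemma dft2_spec_lap:
  assumes "xL < xR" "yL < yR" "even N1" "N1 > 0" "even N2" "N2 > 0" "l1 < N1" "l2 < N2"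
  shows "dft2 N1 N2 (spec_lap xL xR yL yR N1 N2 U) l1 l2
    = - of_real (spectral_symbol (xR - xL) N1 l1 + spectral_symbol (yR - yL) N2 l2)
      * dft2 N1 N2 U l1 l2"
  unfolding spec_lap_def using assms
  by (subst dft2_kronecker_sum[where \<sigma> = "- spectral_symbol (xR - xL) N1 l1"
        and \<tau> = "- spectral_symbol (yR - yL) N2 l2"]) (auto simp: dft_D2_column)

lemma x_cos_le_sin:
  fixes x :: real
  assumes "0 \<le> x" "x \<le> pi"
  shows "x * cos x \<le> sin x"
proof -
  have "(\<lambda>t. sin t - t * cos t) 0 \<le> (\<lambda>t. sin t - t * cos t) x"
  proof (rule DERIV_nonneg_imp_nondecreasing[OF assms(1)])
    fix t assume "0 \<le> t" "t \<le> x"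
    then have "0 \<le> t * sin t" using assms by (intro mult_nonneg_nonneg sin_ge_zero) auto
    moreover have "((\<lambda>t. sin t - t * cos t) has_real_derivative t * sin t) (at t)"
      by (rule derivative_eq_intros refl | simp)+
    ultimately show "\<exists>y. ((\<lambda>t. sin t - t * cos t) has_real_derivative y) (at t) \<and> 0 \<le> y"
      by blast
  qed
  then show ?thesis by simp
qed

lemma jordan_inequality:
  fixes x :: real
  assumes "0 \<le> x" "x \<le> pi / 2"
  shows "2 / pi * x \<le> sin x"
proof (cases "x = 0")
  case False
  then have "0 < x" using assms by simp
  have "(\<lambda>t. sin t / t) (pi / 2) \<le> (\<lambda>t. sin t / t) x"
  proof (rule DERIV_nonpos_imp_decreasing_open[OF assms(2)])
    fix t assume t: "x < t" "t < pi / 2"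
    then have "0 < t" using \<open>0 < x\<close> by simp
    have "((\<lambda>t. sin t / t) has_real_derivative (t * cos t - sin t) / t\<^sup>2) (at t)"
      by (rule derivative_eq_intros refl)+
        (use \<open>0 < t\<close> in \<open>simp_all add: field_simps power2_eq_square\<close>)
    moreover have "(t * cos t - sin t) / t\<^sup>2 \<le> 0"
      using x_cos_le_sin[of t] t \<open>0 < t\<close> by (simp add: divide_nonpos_pos)
    ultimately show "\<exists>y. ((\<lambda>t. sin t / t) has_real_derivative y) (at t) \<and> y \<le> 0"
      by blast
  next
    show "continuous_on {x..pi / 2} (\<lambda>t. sin t / t)"
      using \<open>0 < x\<close> by (intro continuous_intros) auto
  qed
  then show ?thesis using \<open>0 < x\<close> by (simp add: field_simps)
qed simp

lemma fd_symbol_spectral_symbol_bounds: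
  assumes "N > 0" "l < N" "len > 0"
  shows "fd_symbol (len / real N) N l \<le> spectral_symbol len N l
    \<and> spectral_symbol len N l \<le> pi\<^sup>2 / 4 * fd_symbol (len / real N) N l"
proof -
  define h where "h = len / real N"
  define \<theta> where "\<theta> = pi * real (min l (N - l)) / real N"
  have "h > 0" using assms unfolding h_def by simp
  have "0 \<le> \<theta>" "\<theta> \<le> pi / 2"
    using assms(1,2) unfolding \<theta>_def by (auto simp: field_simps)
  have "sin (pi * real l / real N) = sin \<theta>"
  proof (cases "l \<le> N - l")
    case False
    then have "\<theta> = pi - pi * real l / real N"
      unfolding \<theta>_def using assms(1,2) by (simp add: of_nat_diff field_simps)
    then show ?thesis by simp
  qed (simp add: \<theta>_def)
  then have fd: "fd_symbol h N l = (2 * sin \<theta> / h)\<^sup>2"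
    unfolding fd_symbol_def by simp
  have spec: "spectral_symbol len N l = (2 * \<theta> / h)\<^sup>2"
    unfolding spectral_symbol_def \<theta>_def h_def using assms by (simp add: field_simps)
  have "0 \<le> sin \<theta>" "sin \<theta> \<le> \<theta>" "\<theta> \<le> pi / 2 * sin \<theta>"
    using \<open>0 \<le> \<theta>\<close> \<open>\<theta> \<le> pi / 2\<close> jordan_inequality[of \<theta>]
    by (auto intro: sin_ge_zero sin_x_le_x simp: field_simps)
  then have "0 \<le> 2 * sin \<theta> / h" "2 * sin \<theta> / h \<le> 2 * \<theta> / h" "2 * \<theta> / h \<le> pi / 2 * (2 * sin \<theta> / h)"
    using \<open>h > 0\<close> by (simp_all add: divide_right_mono)
  then have "(2 * sin \<theta> / h)\<^sup>2 \<le> (2 * \<theta> / h)\<^sup>2" "(2 * \<theta> / h)\<^sup>2 \<le> (pi / 2 * (2 * sin \<theta> / h))\<^sup>2"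
    by (auto intro!: power_mono)
  then show ?thesis
    unfolding h_def[symmetric] fd spec by (simp add: power_mult_distrib power_divide)
qed

theorem lemma2p3:
  fixes xL xR yL yR :: real and N1 N2 :: nat and U :: "nat \<Rightarrow> nat \<Rightarrow> real"
  assumes "xL < xR" and "yL < yR"
    and "even N1" and "N1 > 0" and "even N2" and "N2 > 0"
  defines "h1 \<equiv> (xR - xL) / real N1" and "h2 \<equiv> (yR - yL) / real N2"
  shows "grid_norm h1 h2 N1 N2 (disc_lap h1 h2 N1 N2 U)
           \<le> grid_norm h1 h2 N1 N2 (spec_lap xL xR yL yR N1 N2 U)
       \<and> grid_norm h1 h2 N1 N2 (spec_lap xL xR yL yR N1 N2 U)
           \<le> pi\<^sup>2 / 4 * grid_norm h1 h2 N1 N2 (disc_lap h1 h2 N1 N2 U)"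
proof -
  have "0 \<le> h1 * h2" unfolding h1_def h2_def using assms(1,2) by simp
  define \<mu> where "\<mu> l1 l2 = fd_symbol h1 N1 l1 + fd_symbol h2 N2 l2" for l1 l2
  define \<nu> where "\<nu> l1 l2 = spectral_symbol (xR - xL) N1 l1 + spectral_symbol (yR - yL) N2 l2"
    for l1 l2
  have disc: "dft2 N1 N2 (disc_lap h1 h2 N1 N2 U) l1 l2 = of_real (- \<mu> l1 l2) * dft2 N1 N2 U l1 l2"
    for l1 l2 unfolding \<mu>_def using dft2_disc_lap[OF assms(4,6)] by simp
  have spec:
    "dft2 N1 N2 (spec_lap xL xR yL yR N1 N2 U) l1 l2 = of_real (- \<nu> l1 l2) * dft2 N1 N2 U l1 l2"
    if "l1 < N1" "l2 < N2" for l1 l2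
    unfolding \<nu>_def using dft2_spec_lap[OF assms(1-6) that] by simp
  have bounds: "0 \<le> \<mu> l1 l2 \<and> \<mu> l1 l2 \<le> \<nu> l1 l2 \<and> \<nu> l1 l2 \<le> pi\<^sup>2 / 4 * \<mu> l1 l2"
    if "l1 < N1" "l2 < N2" for l1 l2
    using fd_symbol_spectral_symbol_bounds[OF assms(4) that(1), of "xR - xL"]
      fd_symbol_spectral_symbol_bounds[OF assms(6) that(2), of "yR - yL"] assms(1,2)
    unfolding \<mu>_def \<nu>_def h1_def h2_def by (simp add: distrib_left fd_symbol_def)
  have "grid_norm h1 h2 N1 N2 (disc_lap h1 h2 N1 N2 U)
      \<le> 1 * grid_norm h1 h2 N1 N2 (spec_lap xL xR yL yR N1 N2 U)"
    by (rule grid_norm_le_if_multiplier_le[OF assms(4,6) \<open>0 \<le> h1 * h2\<close> _ disc spec])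
      (auto dest!: bounds)
  moreover have "grid_norm h1 h2 N1 N2 (spec_lap xL xR yL yR N1 N2 U)
      \<le> pi\<^sup>2 / 4 * grid_norm h1 h2 N1 N2 (disc_lap h1 h2 N1 N2 U)"
    by (rule grid_norm_le_if_multiplier_le[OF assms(4,6) \<open>0 \<le> h1 * h2\<close> _ spec disc])
      (auto dest!: bounds)
  ultimately show ?thesis by simp
qed

end
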